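(* Let $\phi$ be a formula. If there exists a closed term $M$ such that $M:\phi$ (with respect to $\Omega$), then $\phi$ is $\Lambda_{\mathrm{NF}}$-inhabited.
   Context: Formulas are built from propositional atoms with $\to$. Let $\mathcal X$ be a countably infinite set of variables with an injective map $\mathcal O:\mathcal X\to\mathbb N$; write $x<y$ iff $\mathcal O(x)<\mathcal O(y)$. Terms are terms of pure $\lambda$-calculus over $\mathcal X$, not identified up to $\alpha$-conversion; by convention two distinct $\lambda$'s never bind the same variable in a term and no variable is both free and bound in a term. $\mathrm{Free}(M)$ is the strictly increasing sequence of free variables of $M$. Hereditarily right-maximal (HRM) terms are defined inductively: every variable is HRM; if $M$ is HRM and $x$ is the greatest free variable of $M$, then $\lambda x.M$ is HRM; if $M,N$ are HRM and for each free variable $x$ of $M$ there is a free variable $y$ of $N$ with $x\le y$, then $(MN)$ is HRM. Fix a function $\Omega$ from variables to formulas such that $\Omega^{-1}(\phi)$ is infinite for every formula $\phi$. The judgment $M:\phi$ ("$M$ has type $\phi$") is defined by: $x:\Omega(x)$; if $x:\chi$, $M:\psi$ and $\lambda x.M$ is HRM then $\lambda x.M:\chi\to\psi$; if $M:\chi\to\psi$, $N:\chi$ and $(MN)$ is HRM then $(MN):\psi$. $\Lambda_{\mathrm{NF}}$ denotes the set of typed terms in $\beta$-normal form; a $\Lambda_{\mathrm{NF}}$-inhabitant of $\phi$ is a closed term of $\Lambda_{\mathrm{NF}}$ of type $\phi$, and $\phi$ is $\Lambda_{\mathrm{NF}}$-inhabited if it has one. *)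

theory Defs
  imports Main
begin

datatype 'a form = Atom 'a | Imp "'a form" "'a form"

text \<open>Raw (non alpha-quotiented) lambda terms over variables of type 'v.\<close>
datatype 'v trm = Var 'v | Lam 'v "'v trm" | App "'v trm" "'v trm"

fun fv :: "'v trm \<Rightarrow> 'v set" where
  "fv (Var x) = {x}"
| "fv (Lam x M) = fv M - {x}"
| "fv (App M N) = fv M \<union> fv N"

fun bvs :: "'v trm \<Rightarrow> 'v list" where
  "bvs (Var x) = []"
| "bvs (Lam x M) = x # bvs M"
| "bvs (App M N) = bvs M @ bvs N"

definition var_conv :: "'v trm \<Rightarrow> bool" where
  "var_conv M \<longleftrightarrow> distinct (bvs M) \<and> set (bvs M) \<inter> fv M = {}"

definition closed :: "'v trm \<Rightarrow> bool" where
  "closed M \<longleftrightarrow> fv M = {}"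

text \<open>Hereditarily right-maximal terms, w.r.t. the order x < y iff ord x < ord y.\<close>
inductive HRM :: "('v \<Rightarrow> nat) \<Rightarrow> 'v trm \<Rightarrow> bool" for ord where
  HRM_Var: "HRM ord (Var x)"
| HRM_Lam: "\<lbrakk>HRM ord M; x \<in> fv M; \<forall>y\<in>fv M. ord y \<le> ord x\<rbrakk> \<Longrightarrow> HRM ord (Lam x M)"
| HRM_App: "\<lbrakk>HRM ord M; HRM ord N; \<forall>x\<in>fv M. \<exists>y\<in>fv N. ord x \<le> ord y\<rbrakk>
             \<Longrightarrow> HRM ord (App M N)"

inductive has_type :: "('v \<Rightarrow> nat) \<Rightarrow> ('v \<Rightarrow> 'a form) \<Rightarrow> 'v trm \<Rightarrow> 'a form \<Rightarrow> bool"
  for ord \<Omega> where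
  ty_Var: "has_type ord \<Omega> (Var x) (\<Omega> x)"
| ty_Lam: "\<lbrakk>has_type ord \<Omega> (Var x) \<chi>; has_type ord \<Omega> M \<psi>; HRM ord (Lam x M)\<rbrakk>
           \<Longrightarrow> has_type ord \<Omega> (Lam x M) (Imp \<chi> \<psi>)"
| ty_App: "\<lbrakk>has_type ord \<Omega> M (Imp \<chi> \<psi>); has_type ord \<Omega> N \<chi>; HRM ord (App M N)\<rbrakk>
           \<Longrightarrow> has_type ord \<Omega> (App M N) \<psi>"

fun beta_normal :: "'v trm \<Rightarrow> bool" where
  "beta_normal (Var x) = True"
| "beta_normal (Lam x M) = beta_normal M"
| "beta_normal (App M N) = ((\<forall>x P. M \<noteq> Lam x P) \<and> beta_normal M \<and> beta_normal N)"

definition NF_inhabitant :: "('v \<Rightarrow> nat) \<Rightarrow> ('v \<Rightarrow> 'a form) \<Rightarrow> 'v trm \<Rightarrow> 'a form \<Rightarrow> bool" where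
  "NF_inhabitant ord \<Omega> M \<phi> \<longleftrightarrow> var_conv M \<and> closed M \<and> beta_normal M \<and> has_type ord \<Omega> M \<phi>"

definition NF_inhabited :: "('v \<Rightarrow> nat) \<Rightarrow> ('v \<Rightarrow> 'a form) \<Rightarrow> 'a form \<Rightarrow> bool" where
  "NF_inhabited ord \<Omega> \<phi> \<longleftrightarrow> (\<exists>M. NF_inhabitant ord \<Omega> M \<phi>)"

end

theory Submission
  imports Defs
begin

text \<open>Normalization by hereditary substitution. Contracting a redex (\<lambda>y. S) N of type \<chi> \<rightarrow> \<psi>
  substitutes N into the normal term S; new redexes arise only where N, an abstraction, meets
  an application, and then at types smaller than \<chi>, so an induction on the size of the type
  of substituted non-variables terminates. Hereditary right-maximality survives because
  substitutions are required to preserve the variable order up to domination of free-variable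
  sets, and bound variables are replaced by fresh variables of the same type lying above all
  free variables (available since every type has infinitely many variables). A last renaming
  of binders establishes the variable convention.\<close>

abbreviation ord_le :: "('v \<Rightarrow> nat) \<Rightarrow> 'v \<Rightarrow> 'v \<Rightarrow> bool" where
  "ord_le ord a b \<equiv> ord a \<le> ord b"

definition dominated :: "('v \<Rightarrow> nat) \<Rightarrow> 'v set \<Rightarrow> 'v set \<Rightarrow> bool" where
  "dominated ord A B \<longleftrightarrow> (\<forall>a\<in>A. \<exists>b\<in>B. ord a \<le> ord b)"

lemma dominated_refl: "dominated ord A A"
  by (auto simp: dominated_def)

lemma dominated_singleton_right: "dominated ord A {b} \<longleftrightarrow> (\<forall>a\<in>A. ord a \<le> ord b)"
  by (simp add: dominated_def)

fun is_Lam :: "'v trm \<Rightarrow> bool" where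
  "is_Lam (Lam x M) = True"
| "is_Lam (Var x) = False"
| "is_Lam (App M N) = False"

lemma beta_normal_App [simp]:
  "beta_normal (App M N) \<longleftrightarrow> \<not> is_Lam M \<and> beta_normal M \<and> beta_normal N"
  by (cases M) auto

declare beta_normal.simps(3) [simp del]

lemma finite_fv: "finite (fv M)"
  by (induction M) auto

lemma has_type_HRM: "has_type ord \<Omega> M \<phi> \<Longrightarrow> HRM ord M"
  by (induction rule: has_type.induct) (auto intro: HRM.intros)

inductive_cases HRM_LamE: "HRM ord (Lam x M)"
inductive_cases has_type_VarE: "has_type ord \<Omega> (Var x) \<phi>"
inductive_cases has_type_AppE: "has_type ord \<Omega> (App M N) \<psi>"

lemma HRM_App_iff:
  "HRM ord (App M N) \<longleftrightarrow> HRM ord M \<and> HRM ord N \<and> dominated ord (fv M) (fv N)"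
  by (auto simp: dominated_def intro: HRM_App elim: HRM.cases)

lemma has_type_Var_iff: "has_type ord \<Omega> (Var x) \<phi> \<longleftrightarrow> \<phi> = \<Omega> x"
  by (auto intro: ty_Var elim: has_type_VarE)

lemma has_type_LamI:
  "has_type ord \<Omega> M \<psi> \<Longrightarrow> HRM ord (Lam x M) \<Longrightarrow> has_type ord \<Omega> (Lam x M) (Imp (\<Omega> x) \<psi>)"
  by (rule ty_Lam) (simp_all add: has_type_Var_iff)

lemma has_type_Lam_iff:
  "has_type ord \<Omega> (Lam x M) \<phi> \<longleftrightarrow>
     (\<exists>\<psi>. \<phi> = Imp (\<Omega> x) \<psi> \<and> has_type ord \<Omega> M \<psi>) \<and> HRM ord (Lam x M)"
proof
  assume "has_type ord \<Omega> (Lam x M) \<phi>"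
  then show "(\<exists>\<psi>. \<phi> = Imp (\<Omega> x) \<psi> \<and> has_type ord \<Omega> M \<psi>) \<and> HRM ord (Lam x M)"
    by (cases rule: has_type.cases) (auto simp: has_type_Var_iff)
qed (auto intro: has_type_LamI)

lemma has_type_AppI:
  assumes "has_type ord \<Omega> M (Imp \<chi> \<psi>)" "has_type ord \<Omega> N \<chi>" "dominated ord (fv M) (fv N)"
  shows "has_type ord \<Omega> (App M N) \<psi>"
  using assms by (intro ty_App) (simp_all add: HRM_App_iff has_type_HRM)

lemma HRM_binder_unique:
  assumes "inj ord" "HRM ord (Lam z P)" "b \<in> fv P" "ord z \<le> ord b"
  shows "b = z"
proof -
  from assms(2,3) have "ord b \<le> ord z" by (auto elim: HRM_LamE)
  with assms(1,4) show ?thesis by (auto dest: injD)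
qed

text \<open>The binder of an HRM abstraction is the unique maximum of its body, so it may be sent to
  anything above the images of the other variables.\<close>
lemma monotone_on_update_binder:
  assumes "inj ord" "HRM ord (Lam z P)"
    and mono: "monotone_on (fv (Lam z P)) (ord_le ord) R f"
    and below: "\<forall>a\<in>fv (Lam z P). R (f a) t" and "R t t"
  shows "monotone_on (fv P) (ord_le ord) R (f(z := t))"
proof (rule monotone_onI)
  fix a b assume a: "a \<in> fv P" and b: "b \<in> fv P" and ab: "ord a \<le> ord b"
  show "R ((f(z := t)) a) ((f(z := t)) b)"
  proof (cases "b = z")
    case True
    then show ?thesis using a below \<open>R t t\<close> by (cases "a = z") auto
  next
    case False
    then have "a \<noteq> z" using HRM_binder_unique[OF assms(1,2) b] ab by auto
    then show ?thesis using False a b ab monotone_onD[OF mono] by auto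
  qed
qed

lemma exists_var_above:
  fixes ord :: "'v \<Rightarrow> nat"
  assumes "inj ord" "\<forall>\<psi>. infinite (\<Omega> -` {\<psi>})" "finite F"
  shows "\<exists>z. \<Omega> z = \<chi> \<and> (\<forall>y\<in>F. ord y < ord z)"
proof -
  have "infinite (ord ` (\<Omega> -` {\<chi>}))"
    using assms(1,2) by (simp add: finite_image_iff inj_on_subset)
  then obtain z where z: "\<Omega> z = \<chi>" "(\<Sum>y\<in>F. ord y) < ord z"
    unfolding finite_nat_set_iff_bounded_le by (auto simp: not_le)
  have "ord y < ord z" if "y \<in> F" for y
    using member_le_sum[of y F ord] that assms(3) z(2) by linarith
  with z(1) show ?thesis by blast
qed

text \<open>Preserving the order up to domination is what keeps substitution instances
  hereditarily right-maximal.\<close>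
definition admissible_subst ::
  "('v \<Rightarrow> nat) \<Rightarrow> ('v \<Rightarrow> 'a form) \<Rightarrow> nat \<Rightarrow> 'v trm \<Rightarrow> ('v \<Rightarrow> 'v trm) \<Rightarrow> bool" where
  "admissible_subst ord \<Omega> n P \<sigma> \<longleftrightarrow>
     (\<forall>v\<in>fv P. has_type ord \<Omega> (\<sigma> v) (\<Omega> v) \<and> beta_normal (\<sigma> v) \<and>
        (\<sigma> v \<notin> range Var \<longrightarrow> size (\<Omega> v) \<le> n)) \<and>
     monotone_on (fv P) (ord_le ord) (dominated ord) (fv \<circ> \<sigma>)"

text \<open>Hereditary substitution at level n yields a normal term R standing for P\<sigma>. The last
  clause bounds the types of the redexes created when R is applied, which drives the
  induction on n.\<close>
definition subst_normalizes :: "('v \<Rightarrow> nat) \<Rightarrow> ('v \<Rightarrow> 'a form) \<Rightarrow> nat \<Rightarrow> bool" where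
  "subst_normalizes ord \<Omega> n \<longleftrightarrow>
     (\<forall>P \<psi> \<sigma>. beta_normal P \<longrightarrow> has_type ord \<Omega> P \<psi> \<longrightarrow> admissible_subst ord \<Omega> n P \<sigma> \<longrightarrow>
        (\<exists>R. beta_normal R \<and> has_type ord \<Omega> R \<psi> \<and> fv R = (\<Union>v\<in>fv P. fv (\<sigma> v)) \<and>
             (is_Lam R \<longrightarrow> is_Lam P \<or> size \<psi> \<le> n)))"

lemma admissible_subst_mono_fv:
  "fv P \<subseteq> fv Q \<Longrightarrow> admissible_subst ord \<Omega> n Q \<sigma> \<Longrightarrow> admissible_subst ord \<Omega> n P \<sigma>"
  unfolding admissible_subst_def by (auto intro: monotone_on_subset)

lemma dominated_subst_image:
  assumes "dominated ord A B" "monotone_on (A \<union> B) (ord_le ord) (dominated ord) (fv \<circ> \<sigma>)"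
  shows "dominated ord (\<Union>v\<in>A. fv (\<sigma> v)) (\<Union>v\<in>B. fv (\<sigma> v))"
proof (unfold dominated_def, intro ballI)
  fix c assume "c \<in> (\<Union>v\<in>A. fv (\<sigma> v))"
  then obtain a where a: "a \<in> A" "c \<in> fv (\<sigma> a)" by blast
  then obtain b where b: "b \<in> B" "ord a \<le> ord b" using assms(1) by (auto simp: dominated_def)
  then have "dominated ord (fv (\<sigma> a)) (fv (\<sigma> b))"
    using a(1) monotone_onD[OF assms(2)] by auto
  then show "\<exists>d\<in>(\<Union>v\<in>B. fv (\<sigma> v)). ord c \<le> ord d"
    using a(2) b(1) by (auto simp: dominated_def)
qed

lemma contract_redex:
  assumes "inj ord" and hsubst: "subst_normalizes ord \<Omega> (size \<chi>)"
    and "beta_normal S" "has_type ord \<Omega> (Lam y S) (Imp \<chi> \<psi>)"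
    and "beta_normal N" "has_type ord \<Omega> N \<chi>"
    and dom: "dominated ord (fv (Lam y S)) (fv N)"
  shows "\<exists>R. beta_normal R \<and> has_type ord \<Omega> R \<psi> \<and> fv R = fv (Lam y S) \<union> fv N"
proof -
  from assms(4) have \<chi>: "\<chi> = \<Omega> y" and S: "has_type ord \<Omega> S \<psi>" and hrm: "HRM ord (Lam y S)"
    by (auto simp: has_type_Lam_iff)
  from hrm have "y \<in> fv S" by (auto elim: HRM_LamE)
  define \<sigma> where "\<sigma> = Var(y := N)"
  have "monotone_on (fv (Lam y S)) (ord_le ord) (dominated ord) (fv \<circ> Var)"
    by (simp add: monotone_on_def dominated_def)
  moreover have "\<forall>a\<in>fv (Lam y S). dominated ord ((fv \<circ> Var) a) (fv N)"
    using dom by (simp add: dominated_def)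
  ultimately have "monotone_on (fv S) (ord_le ord) (dominated ord) ((fv \<circ> Var)(y := fv N))"
    using dominated_refl by (rule monotone_on_update_binder[OF assms(1) hrm])
  then have adm: "admissible_subst ord \<Omega> (size \<chi>) S \<sigma>"
    using assms(5,6) \<chi> by (simp add: admissible_subst_def \<sigma>_def fun_upd_comp has_type_Var_iff)
  then obtain R where "beta_normal R" "has_type ord \<Omega> R \<psi>" "fv R = (\<Union>v\<in>fv S. fv (\<sigma> v))"
    using hsubst[unfolded subst_normalizes_def, rule_format, OF assms(3) S adm] by blast
  moreover have "(\<Union>v\<in>fv S. fv (\<sigma> v)) = fv (Lam y S) \<union> fv N"
    using \<open>y \<in> fv S\<close> by (auto simp: \<sigma>_def split: if_splits)
  ultimately show ?thesis by auto
qed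

lemma normal_application:
  assumes "inj ord" and "is_Lam M \<Longrightarrow> subst_normalizes ord \<Omega> (size \<chi>)"
    and "beta_normal M" "has_type ord \<Omega> M (Imp \<chi> \<psi>)"
    and "beta_normal N" "has_type ord \<Omega> N \<chi>"
    and "dominated ord (fv M) (fv N)"
  shows "\<exists>R. beta_normal R \<and> has_type ord \<Omega> R \<psi> \<and> fv R = fv M \<union> fv N \<and> (is_Lam R \<longrightarrow> is_Lam M)"
proof (cases "is_Lam M")
  case True
  then obtain y S where "M = Lam y S" by (cases M) auto
  then show ?thesis using contract_redex[of ord \<Omega> \<chi> S y \<psi> N] assms True by simp
next
  case False
  have "has_type ord \<Omega> (App M N) \<psi>"
    using assms(4,6,7) by (rule has_type_AppI)
  then show ?thesis using assms(3,5) False by (intro exI[of _ "App M N"]) simp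
qed

lemma subst_Lam:
  assumes "inj ord" "\<forall>\<psi>. infinite (\<Omega> -` {\<psi>})"
    and IH: "\<And>\<psi> \<sigma>. beta_normal P \<Longrightarrow> has_type ord \<Omega> P \<psi> \<Longrightarrow> admissible_subst ord \<Omega> n P \<sigma> \<Longrightarrow>
      \<exists>R. beta_normal R \<and> has_type ord \<Omega> R \<psi> \<and> fv R = (\<Union>v\<in>fv P. fv (\<sigma> v)) \<and>
          (is_Lam R \<longrightarrow> is_Lam P \<or> size \<psi> \<le> n)"
    and "beta_normal (Lam z P)" "has_type ord \<Omega> (Lam z P) \<phi>"
    and adm: "admissible_subst ord \<Omega> n (Lam z P) \<sigma>"
  shows "\<exists>R. beta_normal R \<and> has_type ord \<Omega> R \<phi> \<and> fv R = (\<Union>v\<in>fv (Lam z P). fv (\<sigma> v)) \<and> is_Lam R"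
proof -
  obtain \<psi> where \<phi>: "\<phi> = Imp (\<Omega> z) \<psi>" and P: "has_type ord \<Omega> P \<psi>" and hrm: "HRM ord (Lam z P)"
    using assms(5) by (auto simp: has_type_Lam_iff)
  from hrm have "z \<in> fv P" by (auto elim: HRM_LamE)
  define F where "F = (\<Union>v\<in>fv (Lam z P). fv (\<sigma> v))"
  have "finite F" unfolding F_def by (simp add: finite_fv)
  then obtain z' where z': "\<Omega> z' = \<Omega> z" "\<forall>y\<in>F. ord y < ord z'"
    using exists_var_above[OF assms(1,2)] by blast
  define \<sigma>' where "\<sigma>' = \<sigma>(z := Var z')"
  have "monotone_on (fv P) (ord_le ord) (dominated ord) ((fv \<circ> \<sigma>)(z := {z'}))"
  proof (rule monotone_on_update_binder[OF assms(1) hrm])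
    show "monotone_on (fv (Lam z P)) (ord_le ord) (dominated ord) (fv \<circ> \<sigma>)"
      using adm by (simp add: admissible_subst_def)
    show "\<forall>a\<in>fv (Lam z P). dominated ord ((fv \<circ> \<sigma>) a) {z'}"
      using z'(2) by (auto simp: F_def dominated_singleton_right less_imp_le)
  qed (rule dominated_refl)
  then have adm': "admissible_subst ord \<Omega> n P \<sigma>'"
    using adm z'(1) by (auto simp: admissible_subst_def \<sigma>'_def fun_upd_comp has_type_Var_iff)
  then obtain R where R: "beta_normal R" "has_type ord \<Omega> R \<psi>" "fv R = (\<Union>v\<in>fv P. fv (\<sigma>' v))"
    using IH[OF _ P adm'] assms(4) by auto
  have fv_R: "fv R = insert z' F"
    using R(3) \<open>z \<in> fv P\<close> by (auto simp: F_def \<sigma>'_def split: if_splits)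
  have "z' \<notin> F" using z'(2) by blast
  have "HRM ord (Lam z' R)"
    using has_type_HRM[OF R(2)] fv_R z'(2) by (auto intro!: HRM_Lam simp: less_imp_le)
  then have "has_type ord \<Omega> (Lam z' R) \<phi>"
    using has_type_LamI[OF R(2)] \<phi> z'(1) by metis
  then show ?thesis
    using R(1) fv_R \<open>z' \<notin> F\<close> by (intro exI[of _ "Lam z' R"]) (auto simp: F_def)
qed

lemma subst_App:
  assumes "inj ord" and smaller: "\<And>m. m < n \<Longrightarrow> subst_normalizes ord \<Omega> m"
    and IH1: "\<And>\<psi> \<sigma>. beta_normal P1 \<Longrightarrow> has_type ord \<Omega> P1 \<psi> \<Longrightarrow> admissible_subst ord \<Omega> n P1 \<sigma> \<Longrightarrow>
      \<exists>R. beta_normal R \<and> has_type ord \<Omega> R \<psi> \<and> fv R = (\<Union>v\<in>fv P1. fv (\<sigma> v)) \<and>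
          (is_Lam R \<longrightarrow> is_Lam P1 \<or> size \<psi> \<le> n)"
    and IH2: "\<And>\<psi> \<sigma>. beta_normal P2 \<Longrightarrow> has_type ord \<Omega> P2 \<psi> \<Longrightarrow> admissible_subst ord \<Omega> n P2 \<sigma> \<Longrightarrow>
      \<exists>R. beta_normal R \<and> has_type ord \<Omega> R \<psi> \<and> fv R = (\<Union>v\<in>fv P2. fv (\<sigma> v)) \<and>
          (is_Lam R \<longrightarrow> is_Lam P2 \<or> size \<psi> \<le> n)"
    and "beta_normal (App P1 P2)" "has_type ord \<Omega> (App P1 P2) \<psi>"
    and adm: "admissible_subst ord \<Omega> n (App P1 P2) \<sigma>"
  shows "\<exists>R. beta_normal R \<and> has_type ord \<Omega> R \<psi> \<and> fv R = (\<Union>v\<in>fv (App P1 P2). fv (\<sigma> v)) \<and>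
           (is_Lam R \<longrightarrow> size \<psi> \<le> n)"
proof -
  obtain \<chi> where P1: "has_type ord \<Omega> P1 (Imp \<chi> \<psi>)" and P2: "has_type ord \<Omega> P2 \<chi>"
    and hrm: "HRM ord (App P1 P2)"
    using assms(6) by (auto elim: has_type_AppE)
  have adm1: "admissible_subst ord \<Omega> n P1 \<sigma>" and adm2: "admissible_subst ord \<Omega> n P2 \<sigma>"
    using admissible_subst_mono_fv[OF _ adm] by auto
  obtain R1 where R1: "beta_normal R1" "has_type ord \<Omega> R1 (Imp \<chi> \<psi>)"
    "fv R1 = (\<Union>v\<in>fv P1. fv (\<sigma> v))" "is_Lam R1 \<longrightarrow> size (Imp \<chi> \<psi>) \<le> n"
    using IH1[OF _ P1 adm1] assms(5) by auto
  obtain R2 where R2: "beta_normal R2" "has_type ord \<Omega> R2 \<chi>" "fv R2 = (\<Union>v\<in>fv P2. fv (\<sigma> v))"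
    using IH2[OF _ P2 adm2] assms(5) by auto
  have "dominated ord (fv R1) (fv R2)"
    unfolding R1(3) R2(3)
    using hrm adm by (intro dominated_subst_image) (auto simp: HRM_App_iff admissible_subst_def)
  moreover have "is_Lam R1 \<Longrightarrow> subst_normalizes ord \<Omega> (size \<chi>)"
    using R1(4) smaller by simp
  ultimately obtain R where "beta_normal R" "has_type ord \<Omega> R \<psi>" "fv R = fv R1 \<union> fv R2"
    "is_Lam R \<longrightarrow> is_Lam R1"
    using normal_application[OF assms(1) _ R1(1,2) R2(1,2)] by blast
  then show ?thesis
    using R1(3,4) R2(3) by (intro exI[of _ R]) auto
qed

theorem subst_normalizes_all:
  assumes "inj ord" "\<forall>\<psi>. infinite (\<Omega> -` {\<psi>})"
  shows "subst_normalizes ord \<Omega> n"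
proof (induction n rule: less_induct)
  case (less n)
  have main: "\<exists>R. beta_normal R \<and> has_type ord \<Omega> R \<psi> \<and> fv R = (\<Union>v\<in>fv P. fv (\<sigma> v)) \<and>
          (is_Lam R \<longrightarrow> is_Lam P \<or> size \<psi> \<le> n)"
    if "beta_normal P" "has_type ord \<Omega> P \<psi>" "admissible_subst ord \<Omega> n P \<sigma>" for P \<psi> \<sigma>
    using that
  proof (induction P arbitrary: \<psi> \<sigma>)
    case (Var x)
    then show ?case
      by (intro exI[of _ "\<sigma> x"]) (auto simp: admissible_subst_def has_type_Var_iff)
  next
    case (Lam z P)
    obtain R where "beta_normal R" "has_type ord \<Omega> R \<psi>" "fv R = (\<Union>v\<in>fv (Lam z P). fv (\<sigma> v))"
      using subst_Lam[OF assms Lam.IH Lam.prems] by blast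
    then show ?case by (intro exI[of _ R]) simp
  next
    case (App P1 P2)
    obtain R where "beta_normal R" "has_type ord \<Omega> R \<psi>" "fv R = (\<Union>v\<in>fv (App P1 P2). fv (\<sigma> v))"
      "is_Lam R \<longrightarrow> size \<psi> \<le> n"
      using subst_App[OF assms(1) less.IH App.IH App.prems] by blast
    then show ?case by (intro exI[of _ R]) simp
  qed
  then show ?case unfolding subst_normalizes_def by (intro allI impI) (rule main)
qed

theorem normal_form_exists:
  assumes "inj ord" "\<forall>\<psi>. infinite (\<Omega> -` {\<psi>})" and "has_type ord \<Omega> M \<phi>"
  shows "\<exists>N. beta_normal N \<and> has_type ord \<Omega> N \<phi> \<and> fv N = fv M"
  using assms(3)
proof (induction rule: has_type.induct)
  case (ty_Var x)
  then show ?case by (intro exI[of _ "Var x"]) (simp add: has_type_Var_iff)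
next
  case (ty_Lam x \<chi> M \<psi>)
  then obtain N where N: "beta_normal N" "has_type ord \<Omega> N \<psi>" "fv N = fv M" by blast
  have "HRM ord (Lam x N)"
    using ty_Lam.hyps(3) has_type_HRM[OF N(2)] N(3) by (auto elim: HRM_LamE intro: HRM_Lam)
  then have "has_type ord \<Omega> (Lam x N) (Imp \<chi> \<psi>)"
    using has_type_LamI[OF N(2)] ty_Lam.hyps(1) by (simp add: has_type_Var_iff)
  then show ?case using N by (intro exI[of _ "Lam x N"]) simp
next
  case (ty_App M \<chi> \<psi> N)
  then obtain M' N' where M': "beta_normal M'" "has_type ord \<Omega> M' (Imp \<chi> \<psi>)" "fv M' = fv M"
    and N': "beta_normal N'" "has_type ord \<Omega> N' \<chi>" "fv N' = fv N" by blast
  have "dominated ord (fv M') (fv N')"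
    using ty_App.hyps(3) M'(3) N'(3) by (simp add: HRM_App_iff)
  then obtain R where "beta_normal R" "has_type ord \<Omega> R \<psi>" "fv R = fv M' \<union> fv N'"
    using normal_application[OF assms(1) subst_normalizes_all[OF assms(1,2)] M'(1,2) N'(1,2)] by blast
  then show ?case using M'(3) N'(3) by (intro exI[of _ R]) simp
qed

lemma dominated_image:
  assumes "dominated ord A B" "monotone_on (A \<union> B) (ord_le ord) (ord_le ord) \<rho>"
  shows "dominated ord (\<rho> ` A) (\<rho> ` B)"
  using assms unfolding dominated_def monotone_on_def by blast

lemma rename_Lam:
  fixes ord :: "'v \<Rightarrow> nat"
  assumes "inj ord" "\<forall>\<psi>. infinite (\<Omega> -` {\<psi>})"
    and IH: "\<And>\<rho> \<psi> (A :: 'v set). beta_normal P \<Longrightarrow> has_type ord \<Omega> P \<psi> \<Longrightarrow>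
      \<forall>v\<in>fv P. \<Omega> (\<rho> v) = \<Omega> v \<Longrightarrow> monotone_on (fv P) (ord_le ord) (ord_le ord) \<rho> \<Longrightarrow> finite A \<Longrightarrow>
      \<exists>R. beta_normal R \<and> has_type ord \<Omega> R \<psi> \<and> fv R = \<rho> ` fv P \<and> var_conv R \<and>
          set (bvs R) \<inter> A = {} \<and> (is_Lam R \<longrightarrow> is_Lam P)"
    and "beta_normal (Lam z P)" "has_type ord \<Omega> (Lam z P) \<phi>"
    and \<Omega>_\<rho>: "\<forall>v\<in>fv (Lam z P). \<Omega> (\<rho> v) = \<Omega> v"
    and mono: "monotone_on (fv (Lam z P)) (ord_le ord) (ord_le ord) \<rho>"
    and "finite A"
  shows "\<exists>R. beta_normal R \<and> has_type ord \<Omega> R \<phi> \<and> fv R = \<rho> ` fv (Lam z P) \<and> var_conv R \<and>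
           set (bvs R) \<inter> A = {}"
proof -
  obtain \<psi> where \<phi>: "\<phi> = Imp (\<Omega> z) \<psi>" and P: "has_type ord \<Omega> P \<psi>" and hrm: "HRM ord (Lam z P)"
    using assms(5) by (auto simp: has_type_Lam_iff)
  from hrm have "z \<in> fv P" by (auto elim: HRM_LamE)
  define F where "F = \<rho> ` fv (Lam z P)"
  have "finite (A \<union> F)" unfolding F_def by (simp add: finite_fv \<open>finite A\<close>)
  then obtain z' where z': "\<Omega> z' = \<Omega> z" "\<forall>y\<in>A \<union> F. ord y < ord z'"
    using exists_var_above[OF assms(1,2)] by blast
  then have "z' \<notin> A" "z' \<notin> F" by blast+
  define \<rho>' where "\<rho>' = \<rho>(z := z')"
  have "monotone_on (fv P) (ord_le ord) (ord_le ord) \<rho>'"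
    unfolding \<rho>'_def
    by (rule monotone_on_update_binder[OF assms(1) hrm mono])
      (use z'(2) in \<open>auto simp: F_def less_imp_le\<close>)
  moreover have "\<forall>v\<in>fv P. \<Omega> (\<rho>' v) = \<Omega> v"
    using \<Omega>_\<rho> z'(1) by (simp add: \<rho>'_def)
  ultimately obtain R where R: "beta_normal R" "has_type ord \<Omega> R \<psi>" "fv R = \<rho>' ` fv P"
    "var_conv R" "set (bvs R) \<inter> insert z' A = {}"
    using IH[OF _ P, of \<rho>' "insert z' A"] assms(4,8) by auto
  have fv_R: "fv R = insert z' F"
    using R(3) \<open>z \<in> fv P\<close> by (auto simp: F_def \<rho>'_def)
  have "HRM ord (Lam z' R)"
    using has_type_HRM[OF R(2)] fv_R z'(2) by (auto intro!: HRM_Lam simp: less_imp_le)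
  then have "has_type ord \<Omega> (Lam z' R) \<phi>"
    using has_type_LamI[OF R(2)] \<phi> z'(1) by metis
  moreover have "var_conv (Lam z' R)"
    using R(4,5) fv_R by (auto simp: var_conv_def)
  ultimately show ?thesis
    using R(1,5) fv_R \<open>z' \<notin> F\<close> \<open>z' \<notin> A\<close> by (intro exI[of _ "Lam z' R"]) (auto simp: F_def)
qed

lemma rename_App:
  fixes ord :: "'v \<Rightarrow> nat"
  assumes IH1: "\<And>\<rho> \<psi> (A :: 'v set). beta_normal P1 \<Longrightarrow> has_type ord \<Omega> P1 \<psi> \<Longrightarrow>
      \<forall>v\<in>fv P1. \<Omega> (\<rho> v) = \<Omega> v \<Longrightarrow> monotone_on (fv P1) (ord_le ord) (ord_le ord) \<rho> \<Longrightarrow> finite A \<Longrightarrow>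
      \<exists>R. beta_normal R \<and> has_type ord \<Omega> R \<psi> \<and> fv R = \<rho> ` fv P1 \<and> var_conv R \<and>
          set (bvs R) \<inter> A = {} \<and> (is_Lam R \<longrightarrow> is_Lam P1)"
    and IH2: "\<And>\<rho> \<psi> (A :: 'v set). beta_normal P2 \<Longrightarrow> has_type ord \<Omega> P2 \<psi> \<Longrightarrow>
      \<forall>v\<in>fv P2. \<Omega> (\<rho> v) = \<Omega> v \<Longrightarrow> monotone_on (fv P2) (ord_le ord) (ord_le ord) \<rho> \<Longrightarrow> finite A \<Longrightarrow>
      \<exists>R. beta_normal R \<and> has_type ord \<Omega> R \<psi> \<and> fv R = \<rho> ` fv P2 \<and> var_conv R \<and>
          set (bvs R) \<inter> A = {} \<and> (is_Lam R \<longrightarrow> is_Lam P2)"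
    and "beta_normal (App P1 P2)" "has_type ord \<Omega> (App P1 P2) \<psi>"
    and \<Omega>_\<rho>: "\<forall>v\<in>fv (App P1 P2). \<Omega> (\<rho> v) = \<Omega> v"
    and mono: "monotone_on (fv (App P1 P2)) (ord_le ord) (ord_le ord) \<rho>"
    and "finite A"
  shows "\<exists>R. beta_normal R \<and> has_type ord \<Omega> R \<psi> \<and> fv R = \<rho> ` fv (App P1 P2) \<and> var_conv R \<and>
           set (bvs R) \<inter> A = {} \<and> \<not> is_Lam R"
proof -
  obtain \<chi> where P1: "has_type ord \<Omega> P1 (Imp \<chi> \<psi>)" and P2: "has_type ord \<Omega> P2 \<chi>"
    and hrm: "HRM ord (App P1 P2)"
    using assms(4) by (auto elim: has_type_AppE)
  define F where "F = \<rho> ` fv (App P1 P2)"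
  have "finite (A \<union> F)" unfolding F_def by (simp add: finite_fv \<open>finite A\<close>)
  then obtain R1 where R1: "beta_normal R1" "has_type ord \<Omega> R1 (Imp \<chi> \<psi>)" "fv R1 = \<rho> ` fv P1"
    "var_conv R1" "set (bvs R1) \<inter> (A \<union> F) = {}" "\<not> is_Lam R1"
    using IH1[OF _ P1, of \<rho> "A \<union> F"] assms(3) \<Omega>_\<rho> monotone_on_subset[OF mono] by auto
  have "finite (A \<union> F \<union> set (bvs R1))" using \<open>finite (A \<union> F)\<close> by simp
  then obtain R2 where R2: "beta_normal R2" "has_type ord \<Omega> R2 \<chi>" "fv R2 = \<rho> ` fv P2"
    "var_conv R2" "set (bvs R2) \<inter> (A \<union> F \<union> set (bvs R1)) = {}"
    using IH2[OF _ P2, of \<rho> "A \<union> F \<union> set (bvs R1)"] assms(3) \<Omega>_\<rho> monotone_on_subset[OF mono] by auto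
  have "dominated ord (fv R1) (fv R2)"
    unfolding R1(3) R2(3) using hrm mono by (intro dominated_image) (simp_all add: HRM_App_iff)
  then have "has_type ord \<Omega> (App R1 R2) \<psi>"
    using R1(2) R2(2) by (intro has_type_AppI)
  moreover have "var_conv (App R1 R2)"
    using R1(3-5) R2(3-5) by (auto simp: var_conv_def F_def)
  ultimately show ?thesis
    using R1(1,3,5,6) R2(1,3,5) by (intro exI[of _ "App R1 R2"]) auto
qed

theorem normal_renaming:
  fixes ord :: "'v \<Rightarrow> nat"
  assumes "inj ord" "\<forall>\<psi>. infinite (\<Omega> -` {\<psi>})"
    and "beta_normal P" "has_type ord \<Omega> P \<psi>" "\<forall>v\<in>fv P. \<Omega> (\<rho> v) = \<Omega> v"
    and "monotone_on (fv P) (ord_le ord) (ord_le ord) \<rho>" "finite A"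
  shows "\<exists>R. beta_normal R \<and> has_type ord \<Omega> R \<psi> \<and> fv R = \<rho> ` fv P \<and> var_conv R \<and>
           set (bvs R) \<inter> A = {} \<and> (is_Lam R \<longrightarrow> is_Lam P)"
  using assms(3-)
proof (induction P arbitrary: \<rho> \<psi> A)
  case (Var x)
  then show ?case
    by (intro exI[of _ "Var (\<rho> x)"]) (simp add: has_type_Var_iff var_conv_def)
next
  case (Lam z P)
  obtain R where "beta_normal R" "has_type ord \<Omega> R \<psi>" "fv R = \<rho> ` fv (Lam z P)" "var_conv R"
    "set (bvs R) \<inter> A = {}"
    using rename_Lam[OF assms(1,2) Lam.IH Lam.prems] by blast
  then show ?case by (intro exI[of _ R]) simp
next
  case (App P1 P2)
  obtain R where "beta_normal R" "has_type ord \<Omega> R \<psi>" "fv R = \<rho> ` fv (App P1 P2)" "var_conv R"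
    "set (bvs R) \<inter> A = {}" "\<not> is_Lam R"
    using rename_App[OF App.IH App.prems] by blast
  then show ?case by (intro exI[of _ R]) simp
qed

theorem lemma1p6:
  fixes ord :: "'v \<Rightarrow> nat" and \<Omega> :: "'v \<Rightarrow> 'a form"
    and \<phi> :: "'a form" and M :: "'v trm"
  assumes "infinite (UNIV :: 'v set)"
    and "inj ord"
    and "\<forall>\<psi>. infinite (\<Omega> -` {\<psi>})"
    and "var_conv M"
    and "closed M"
    and "has_type ord \<Omega> M \<phi>"
  shows "NF_inhabited ord \<Omega> \<phi>"
proof -
  obtain N where N: "beta_normal N" "has_type ord \<Omega> N \<phi>" "fv N = {}"
    using normal_form_exists[OF assms(2,3,6)] assms(5) by (auto simp: closed_def)
  obtain R where "beta_normal R" "has_type ord \<Omega> R \<phi>" "fv R = {}" "var_conv R"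
    using normal_renaming[OF assms(2,3) N(1,2), of id "{}"] N(3) by auto
  then show ?thesis
    unfolding NF_inhabited_def NF_inhabitant_def closed_def by blast
qed

end
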